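(* Let $\gamma\in[0,1)$ and $\Omega_{\gamma}=\{z\in\mathbb{C}:|z+\frac{\gamma}{1-\gamma}|<\frac{1}{1-\gamma}\}$. Let $f=h+\overline{g}$ be a harmonic mapping in $\Omega_\gamma$ with $h,g$ analytic in $\Omega_\gamma$, $|h(z)|\le 1$ on $\Omega_\gamma$, $h(z)=\sum_{n=0}^\infty a_n\left(z+\frac{\gamma}{1-\gamma}\right)^n$ and $g(z)=\sum_{n=1}^\infty b_n\left(z+\frac{\gamma}{1-\gamma}\right)^n$ in $\Omega_\gamma$, and $f$ sense-preserving in $\Omega_\gamma$. Then $$\sum_{n=0}^\infty \frac{|a_n|}{(1-\gamma)^n}\rho^n+\sum_{n=1}^\infty\frac{|b_n|}{(1-\gamma)^n}\rho^n\le 1$$ for $|(1-\gamma)z+\gamma|=\rho\le\rho_0=1/5$. The number $\rho_0$ is best possible.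
   Context: $\Omega_\gamma$ is the open disk centered at $-\gamma/(1-\gamma)$ of radius $1/(1-\gamma)$. A harmonic mapping $f=h+\overline g$ is sense-preserving in $\Omega_\gamma$ if its Jacobian $J_f=|h'|^2-|g'|^2$ is positive in $\Omega_\gamma$ (equivalently $h'\neq0$ and the dilatation $g'/h'$ has modulus less than $1$). *)

theory Defs
  imports "HOL-Analysis.Analysis"
begin

definition Omega :: "real \<Rightarrow> complex set" where
  "Omega \<gamma> = ball (- complex_of_real (\<gamma> / (1 - \<gamma>))) (1 / (1 - \<gamma>))"

text \<open>f = h + conj g is sense-preserving on S: Jacobian |h'|^2 - |g'|^2 positive on S.\<close>
definition sense_preserving_on :: "(complex \<Rightarrow> complex) \<Rightarrow> (complex \<Rightarrow> complex) \<Rightarrow> complex set \<Rightarrow> bool" where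
  "sense_preserving_on h g S \<longleftrightarrow> (\<forall>z\<in>S. (cmod (deriv h z))^2 - (cmod (deriv g z))^2 > 0)"

definition bohr_hyps :: "real \<Rightarrow> (complex \<Rightarrow> complex) \<Rightarrow> (complex \<Rightarrow> complex) \<Rightarrow> (nat \<Rightarrow> complex) \<Rightarrow> (nat \<Rightarrow> complex) \<Rightarrow> bool" where
  "bohr_hyps \<gamma> h g a b \<longleftrightarrow>
     h holomorphic_on Omega \<gamma> \<and> g holomorphic_on Omega \<gamma> \<and>
     (\<forall>z\<in>Omega \<gamma>. cmod (h z) \<le> 1) \<and>
     (\<forall>z\<in>Omega \<gamma>. (\<lambda>n. a n * (z + complex_of_real (\<gamma> / (1 - \<gamma>))) ^ n) sums h z) \<and>
     (\<forall>z\<in>Omega \<gamma>. (\<lambda>n. b (Suc n) * (z + complex_of_real (\<gamma> / (1 - \<gamma>))) ^ Suc n) sums g z) \<and>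
     sense_preserving_on h g (Omega \<gamma>)"

definition bohr_sum :: "real \<Rightarrow> (nat \<Rightarrow> complex) \<Rightarrow> (nat \<Rightarrow> complex) \<Rightarrow> real \<Rightarrow> real" where
  "bohr_sum \<gamma> a b \<rho> =
     (\<Sum>n. cmod (a n) / (1 - \<gamma>) ^ n * \<rho> ^ n) +
     (\<Sum>n. cmod (b (Suc n)) / (1 - \<gamma>) ^ Suc n * \<rho> ^ Suc n)"

end

(*
  The affine map z \<mapsto> (1 - \<gamma>) z + \<gamma> carries Omega \<gamma> onto the unit disk and turns the
  coefficients a\<^sub>n, b\<^sub>n into a\<^sub>n / (1 - \<gamma>)\<^sup>n, b\<^sub>n / (1 - \<gamma>)\<^sup>n, so everything reduces to \<gamma> = 0.
  On the disk, Wiener's inequality |c\<^sub>n| \<le> 1 - |c\<^sub>0|\<^sup>2 holds for h and for the dilatation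
  \<omega> = g' / h', which maps the disk into the closed disk because f is sense-preserving.
  Comparing coefficients in g' = \<omega> h' gives |b\<^sub>k\<^sub>+\<^sub>1| \<le> (1 - |a\<^sub>0|\<^sup>2) (|\<omega>\<^sub>0| + (1 - |\<omega>\<^sub>0|\<^sup>2) k),
  and summing against \<rho>\<^sup>n leaves a quadratic in t = \<rho> / (1 - \<rho>) that is at most 1 for t \<le> 1/4.
  For sharpness, h = (\<alpha> - z) / (1 - \<alpha> z) and g = \<alpha> (h - \<alpha>) have Bohr sum
  \<alpha> + (1 + \<alpha>) (1 - \<alpha>\<^sup>2) \<rho> / (1 - \<alpha> \<rho>), which exceeds 1 for \<alpha> near 1 once \<rho> > 1/5.
*)
theory Submission
  imports Defs "HOL-Complex_Analysis.Complex_Analysis"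
begin

section \<open>Wiener's inequality\<close>

lemma sum_roots_unity_power:
  assumes "n > 0"
  shows "(\<Sum>k<n. exp (2 * of_real pi * \<i> * of_nat k / of_nat n) ^ m) =
           (if n dvd m then of_nat n else (0::complex))"
proof -
  define x where "x = exp (2 * of_real pi * \<i> * of_nat m / of_nat n)"
  have powers: "exp (2 * of_real pi * \<i> * of_nat k / of_nat n) ^ m = x ^ k" for k
    unfolding x_def exp_of_nat_mult[symmetric] by (simp add: algebra_simps)
  have x_eq_1: "x = 1 \<longleftrightarrow> n dvd m"
    unfolding x_def using complex_root_unity_eq_1[of n m] assms by simp
  have "x ^ n = 1"
    unfolding x_def using complex_root_unity[of n m] assms by simp
  then show ?thesis
    using x_eq_1 by (simp add: powers sum_gp_strict)
qed

lemma norm_diff_le_norm_one_minus_cnj_mult: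
  fixes a w :: complex
  assumes "norm w \<le> 1" "norm a < 1"
  shows "norm (w - a) \<le> norm (1 - cnj a * w)"
proof -
  have "(norm (1 - cnj a * w))\<^sup>2 - (norm (w - a))\<^sup>2 = (1 - (norm a)\<^sup>2) * (1 - (norm w)\<^sup>2)"
    unfolding cmod_power2 by (simp add: power2_eq_square algebra_simps)
  moreover have "0 \<le> (1 - (norm a)\<^sup>2) * (1 - (norm w)\<^sup>2)"
    using assms by (intro mult_nonneg_nonneg) (auto simp: power_le_one abs_square_le_1)
  ultimately have "(norm (w - a))\<^sup>2 \<le> (norm (1 - cnj a * w))\<^sup>2"
    by linarith
  then show ?thesis
    by (rule power2_le_imp_le) simp
qed

lemma tendsto_le_at_left_1:
  fixes f g :: "real \<Rightarrow> real"
  assumes "\<And>t. 0 < t \<Longrightarrow> t < 1 \<Longrightarrow> f t \<le> g t"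
    and "(f \<longlongrightarrow> A) (at_left 1)" and "(g \<longlongrightarrow> B) (at_left 1)"
  shows "A \<le> B"
proof -
  have "eventually (\<lambda>t. f t \<le> g t) (at_left (1::real))"
    using eventually_at_left_real[of 0 1] by (auto elim!: eventually_mono intro: assms)
  then show ?thesis
    using tendsto_le[OF trivial_limit_at_left_real assms(3) assms(2)] by auto
qed

lemma norm_fps_nth_le_1_if_bounded_on_disk:
  fixes F :: "complex \<Rightarrow> complex" and P :: "complex fps"
  assumes hol: "F holomorphic_on ball 0 1"
    and bnd: "\<And>u. u \<in> ball 0 1 \<Longrightarrow> norm (F u) \<le> 1"
    and exp: "F has_fps_expansion P"
  shows "norm (fps_nth P n) \<le> 1"
proof -
  have "norm (fps_nth P n) * r ^ n \<le> 1" if r: "0 < r" "r < 1" for r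
  proof -
    have "norm ((deriv ^^ n) F 0) \<le> fact n * 1 / r ^ n"
    proof (rule Cauchy_inequality)
      show "F holomorphic_on ball 0 r"
        using r by (intro holomorphic_on_subset[OF hol]) auto
      show "continuous_on (cball 0 r) F"
        using r by (intro continuous_on_subset[OF holomorphic_on_imp_continuous_on[OF hol]]) auto
      show "norm (F x) \<le> 1" if "norm (0 - x) = r" for x
        using that r by (intro bnd) auto
    qed (use r in auto)
    moreover have "norm ((deriv ^^ n) F 0) = fact n * norm (fps_nth P n)"
      by (simp add: fps_nth_fps_expansion[OF exp] norm_divide norm_fact)
    ultimately show ?thesis
      using r by (simp add: field_simps)
  qed
  then show ?thesis
    by (rule tendsto_le_at_left_1) (auto intro!: tendsto_eq_intros)
qed

text \<open>The Moebius transform \<open>\<Phi> = (F - P\<^sub>0) / (1 - cnj P\<^sub>0 F)\<close> is again bounded by \<open>1\<close>, and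
  because of the gap its \<open>n\<close>-th coefficient is \<open>P\<^sub>n / (1 - \<bar>P\<^sub>0\<bar>\<^sup>2)\<close>.\<close>
lemma norm_fps_nth_after_gap_le_strict:
  fixes F :: "complex \<Rightarrow> complex" and P :: "complex fps"
  assumes hol: "F holomorphic_on ball 0 1"
    and bnd: "\<And>u. u \<in> ball 0 1 \<Longrightarrow> norm (F u) \<le> 1"
    and exp: "F has_fps_expansion P"
    and gap: "\<And>i. 0 < i \<Longrightarrow> i < n \<Longrightarrow> fps_nth P i = 0"
    and P0: "norm (fps_nth P 0) < 1" and n: "n > 0"
  shows "norm (fps_nth P n) \<le> 1 - (norm (fps_nth P 0))\<^sup>2"
proof -
  define c where "c = fps_nth P 0"
  define \<Phi> where "\<Phi> u = (F u - c) * inverse (1 - cnj c * F u)" for u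
  have den: "1 - cnj c * F u \<noteq> 0" if "u \<in> ball 0 1" for u
  proof -
    have "norm (cnj c * F u) \<le> norm c * 1"
      unfolding norm_mult complex_mod_cnj by (intro mult_left_mono bnd that) auto
    then show ?thesis
      using P0 by (auto simp: c_def)
  qed
  have norm_c: "cnj c * c = of_real ((norm c)\<^sup>2)" "(norm c)\<^sup>2 < 1"
    using P0 by (simp_all add: c_def complex_norm_square[symmetric] mult.commute abs_square_less_1)
  then have "1 - cnj c * c \<noteq> 0"
    by (metis of_real_1 of_real_diff of_real_eq_0_iff right_minus_eq less_irrefl)
  then have "\<Phi> has_fps_expansion (P - fps_const c) * inverse (1 - fps_const (cnj c) * P)"
    unfolding \<Phi>_def[abs_def] by (intro fps_expansion_intros exp) (auto simp: c_def)
  moreover have "\<Phi> holomorphic_on ball 0 1"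
    unfolding \<Phi>_def using den by (intro holomorphic_intros hol) auto
  moreover have "norm (\<Phi> u) \<le> 1" if "u \<in> ball 0 1" for u
    using norm_diff_le_norm_one_minus_cnj_mult[OF bnd[OF that] P0] den[OF that]
    by (simp add: \<Phi>_def c_def norm_divide divide_inverse[symmetric] divide_le_eq_1)
  ultimately have bound: "norm (fps_nth ((P - fps_const c) * inverse (1 - fps_const (cnj c) * P)) n) \<le> 1"
    using norm_fps_nth_le_1_if_bounded_on_disk by blast
  have "fps_nth ((P - fps_const c) * inverse (1 - fps_const (cnj c) * P)) n
          = (\<Sum>i\<in>{n}. fps_nth (P - fps_const c) i * fps_nth (inverse (1 - fps_const (cnj c) * P)) (n - i))"
    unfolding fps_mult_nth
    by (rule sum.mono_neutral_right) (auto simp: c_def gap)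
  also have "\<dots> = fps_nth P n / of_real (1 - (norm c)\<^sup>2)"
    using n norm_c by (simp add: c_def divide_inverse)
  finally have "norm (fps_nth P n) / (1 - (norm c)\<^sup>2) \<le> 1"
    using bound norm_c(2) by (metis abs_of_pos diff_gt_0_iff_gt norm_divide norm_of_real)
  then show ?thesis
    using norm_c(2) by (simp add: c_def divide_le_eq)
qed

lemma norm_fps_nth_after_gap_le:
  fixes F :: "complex \<Rightarrow> complex" and P :: "complex fps"
  assumes hol: "F holomorphic_on ball 0 1"
    and bnd: "\<And>u. u \<in> ball 0 1 \<Longrightarrow> norm (F u) \<le> 1"
    and exp: "F has_fps_expansion P"
    and gap: "\<And>i. 0 < i \<Longrightarrow> i < n \<Longrightarrow> fps_nth P i = 0" and n: "n > 0"
  shows "norm (fps_nth P n) \<le> 1 - (norm (fps_nth P 0))\<^sup>2"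
proof -
  have P0: "norm (fps_nth P 0) \<le> 1"
    using bnd[of 0] has_fps_expansion_imp_0_eq_fps_nth_0[OF exp] by simp
  have "t * norm (fps_nth P n) \<le> 1 - t\<^sup>2 * (norm (fps_nth P 0))\<^sup>2" if t: "0 < t" "t < 1" for t
  proof -
    have "norm (fps_nth (fps_const (of_real t) * P) n) \<le> 1 - (norm (fps_nth (fps_const (of_real t) * P) 0))\<^sup>2"
    proof (rule norm_fps_nth_after_gap_le_strict)
      show "(\<lambda>u. of_real t * F u) holomorphic_on ball 0 1"
        by (intro holomorphic_intros hol)
      show "norm (of_real t * F u) \<le> 1" if "u \<in> ball 0 1" for u
      proof -
        have "t * norm (F u) \<le> 1"
          using t bnd[OF that] by (intro mult_le_one) auto
        then show ?thesis
          using t by (simp add: norm_mult)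
      qed
      show "(\<lambda>u. of_real t * F u) has_fps_expansion fps_const (of_real t) * P"
        by (intro fps_expansion_intros exp)
      have "t * norm (fps_nth P 0) < 1"
        using mult_left_le[OF P0, of t] t by linarith
      then show "norm (fps_nth (fps_const (of_real t) * P) 0) < 1"
        using t by (simp add: norm_mult)
      show "fps_nth (fps_const (of_real t) * P) i = 0" if "0 < i" "i < n" for i
        using gap[OF that] by simp
    qed (rule n)
    then show ?thesis
      using t by (simp add: norm_mult power_mult_distrib)
  qed
  then have "1 * norm (fps_nth P n) \<le> 1 - 1\<^sup>2 * (norm (fps_nth P 0))\<^sup>2"
    by (rule tendsto_le_at_left_1) (auto intro!: tendsto_eq_intros)
  then show ?thesis by simp
qed

lemma has_fps_expansion_roots_unity_average:
  fixes F :: "complex \<Rightarrow> complex" and P :: "complex fps"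
  assumes exp: "F has_fps_expansion P" and n: "n > 0"
  shows "(\<lambda>u. (\<Sum>k<n. F (exp (2 * of_real pi * \<i> * of_nat k / of_nat n) * u)) / of_nat n)
           has_fps_expansion Abs_fps (\<lambda>m. if n dvd m then fps_nth P m else 0)"
proof -
  define e where "e k = exp (2 * of_real pi * \<i> * of_nat k / of_nat n)" for k
  define Q where "Q = (\<Sum>k<n. fps_compose P (fps_const (e k) * fps_X)) * fps_const (inverse (of_nat n))"
  have "(F \<circ> (\<lambda>u. e k * u)) has_fps_expansion fps_compose P (fps_const (e k) * fps_X)" for k
    by (intro has_fps_expansion_compose exp fps_expansion_intros) simp
  then have "(\<lambda>u. (\<Sum>k<n. F (e k * u)) * inverse (of_nat n)) has_fps_expansion Q"
    unfolding Q_def by (intro fps_expansion_intros) (simp add: o_def)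
  moreover have "fps_nth Q m = (\<Sum>k<n. e k ^ m) * fps_nth P m / of_nat n" for m
    by (simp add: Q_def fps_sum_nth sum_distrib_right divide_inverse)
  then have "Q = Abs_fps (\<lambda>m. if n dvd m then fps_nth P m else 0)"
    using n by (simp add: fps_eq_iff sum_roots_unity_power[OF n, folded e_def])
  ultimately show ?thesis
    by (simp only: e_def divide_inverse)
qed

text \<open>The mean of \<open>F\<close> over the rotations by \<open>n\<close>-th roots of unity keeps only the coefficients
  of index divisible by \<open>n\<close>, so it has a gap below \<open>n\<close>.\<close>
theorem wiener_inequality:
  fixes F :: "complex \<Rightarrow> complex" and P :: "complex fps"
  assumes hol: "F holomorphic_on ball 0 1"
    and bnd: "\<And>u. u \<in> ball 0 1 \<Longrightarrow> norm (F u) \<le> 1"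
    and exp: "F has_fps_expansion P" and n: "n > 0"
  shows "norm (fps_nth P n) \<le> 1 - (norm (fps_nth P 0))\<^sup>2"
proof -
  define e where "e k = exp (2 * of_real pi * \<i> * of_nat k / of_nat n)" for k
  define S where "S u = (\<Sum>k<n. F (e k * u)) / of_nat n" for u
  have rot: "e k * u \<in> ball 0 1" if "u \<in> ball 0 1" for k u
    using that by (simp add: e_def norm_mult norm_exp_eq_Re)
  have "S holomorphic_on ball 0 1"
    unfolding S_def using rot
    by (intro holomorphic_intros holomorphic_on_compose_gen[OF _ hol, unfolded o_def]) auto
  moreover have "norm (S u) \<le> 1" if "u \<in> ball 0 1" for u
  proof -
    have "norm (\<Sum>k<n. F (e k * u)) \<le> (\<Sum>k<n. 1)"
      by (rule order.trans[OF norm_sum sum_mono]) (intro bnd rot that)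
    then show ?thesis
      using n by (simp add: S_def norm_divide divide_le_eq)
  qed
  moreover have "S has_fps_expansion Abs_fps (\<lambda>m. if n dvd m then fps_nth P m else 0)"
    unfolding S_def[abs_def] e_def by (rule has_fps_expansion_roots_unity_average[OF exp n])
  ultimately have "norm (fps_nth (Abs_fps (\<lambda>m. if n dvd m then fps_nth P m else 0)) n)
                     \<le> 1 - (norm (fps_nth (Abs_fps (\<lambda>m. if n dvd m then fps_nth P m else 0)) 0))\<^sup>2"
    by (rule norm_fps_nth_after_gap_le) (use n in \<open>auto dest: dvd_imp_le\<close>)
  then show ?thesis by simp
qed

section \<open>The Bohr inequality on the unit disk\<close>

lemma has_fps_expansion_if_sums_on_disk:
  fixes F :: "complex \<Rightarrow> complex"
  assumes "\<And>u. u \<in> ball 0 1 \<Longrightarrow> (\<lambda>n. c n * u ^ n) sums F u"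
  shows "F has_fps_expansion Abs_fps c"
proof (rule has_fps_expansionI)
  have "eventually (\<lambda>u. u \<in> ball 0 1) (nhds (0::complex))"
    by (intro eventually_nhds_in_open) auto
  then show "eventually (\<lambda>u. (\<lambda>n. fps_nth (Abs_fps c) n * u ^ n) sums F u) (nhds 0)"
    by eventually_elim (simp add: assms)
qed

text \<open>\<open>W\<close> is the expansion of the dilatation \<open>G' / H'\<close>, which sense-preservation makes a map
  of the disk into the closed disk.\<close>
lemma sense_preserving_dilatation_fps:
  fixes H G :: "complex \<Rightarrow> complex" and A B :: "complex fps"
  assumes holH: "H holomorphic_on ball 0 1" and holG: "G holomorphic_on ball 0 1"
    and sp: "sense_preserving_on H G (ball 0 1)"
    and expH: "H has_fps_expansion A" and expG: "G has_fps_expansion B"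
  obtains W where "fps_deriv B = W * fps_deriv A"
    and "norm (fps_nth W 0) \<le> 1"
    and "\<And>n. n > 0 \<Longrightarrow> norm (fps_nth W n) \<le> 1 - (norm (fps_nth W 0))\<^sup>2"
proof -
  have lt: "norm (deriv G u) < norm (deriv H u)" if "u \<in> ball 0 1" for u
    using sp that unfolding sense_preserving_on_def
    by (metis diff_gt_0_iff_gt norm_ge_zero power_less_imp_less_base)
  then have H'_nz: "deriv H u \<noteq> 0" if "u \<in> ball 0 1" for u
    using that by fastforce
  define \<omega> where "\<omega> u = deriv G u / deriv H u" for u
  have hol\<omega>: "\<omega> holomorphic_on ball 0 1"
    unfolding \<omega>_def using H'_nz by (intro holomorphic_intros holomorphic_deriv holG holH) auto
  have bnd\<omega>: "norm (\<omega> u) \<le> 1" if "u \<in> ball 0 1" for u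
    using lt[OF that] H'_nz[OF that] by (simp add: \<omega>_def norm_divide divide_le_eq_1)
  define W where "W = fps_expansion \<omega> 0"
  have exp\<omega>: "\<omega> has_fps_expansion W"
    unfolding W_def using hol\<omega> by (intro has_fps_expansion_fps_expansion) auto
  have G'_eq: "eventually (\<lambda>u. \<omega> u * deriv H u = deriv G u) (nhds 0)"
    using eventually_nhds_in_open[of "ball 0 1" 0] by (auto elim!: eventually_mono simp: \<omega>_def H'_nz)
  have "deriv G has_fps_expansion W * fps_deriv A"
    using has_fps_expansion_mult[OF exp\<omega> has_fps_expansion_deriv[OF expH]]
    by (subst (asm) has_fps_expansion_cong[OF G'_eq refl])
  then have "fps_deriv B = W * fps_deriv A"
    using fps_expansion_unique_complex[OF has_fps_expansion_deriv[OF expG]] by blast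
  moreover have "norm (fps_nth W 0) \<le> 1"
    using bnd\<omega>[of 0] has_fps_expansion_imp_0_eq_fps_nth_0[OF exp\<omega>] by simp
  moreover have "norm (fps_nth W n) \<le> 1 - (norm (fps_nth W 0))\<^sup>2" if "n > 0" for n
    by (rule wiener_inequality[OF hol\<omega> bnd\<omega> exp\<omega> that])
  ultimately show ?thesis
    using that by blast
qed

lemma norm_fps_nth_Suc_le_if_fps_deriv_eq_mult:
  fixes A B W :: "complex fps"
  assumes eq: "fps_deriv B = W * fps_deriv A"
    and A: "\<And>n. n > 0 \<Longrightarrow> norm (fps_nth A n) \<le> c"
    and W0: "norm (fps_nth W 0) \<le> w" and W: "\<And>n. n > 0 \<Longrightarrow> norm (fps_nth W n) \<le> d"
  shows "norm (fps_nth B (Suc k)) \<le> c * (w + d * k)"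
proof -
  have c: "0 \<le> c" and d: "0 \<le> d"
    using A[of 1] W[of 1] by (auto intro: order.trans[OF norm_ge_zero])
  have "of_nat (Suc k) * fps_nth B (Suc k)
          = (\<Sum>i=0..k. fps_nth W i * (of_nat (Suc (k - i)) * fps_nth A (Suc (k - i))))"
    using arg_cong[OF eq, of "\<lambda>F. fps_nth F k"] by (simp add: fps_mult_nth)
  then have "real (Suc k) * norm (fps_nth B (Suc k))
               = norm (\<Sum>i=0..k. fps_nth W i * (of_nat (Suc (k - i)) * fps_nth A (Suc (k - i))))"
    by (metis norm_mult norm_of_nat)
  also have "\<dots> \<le> (\<Sum>i=0..k. norm (fps_nth W i) * (real (Suc (k - i)) * norm (fps_nth A (Suc (k - i)))))"
    by (intro order.trans[OF norm_sum] sum_mono) (simp only: norm_mult norm_of_nat order_refl)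
  also have "\<dots> \<le> (\<Sum>i=0..k. if i = 0 then w * (real k + 1) * c else d * real k * c)"
  proof (rule sum_mono)
    fix i assume i: "i \<in> {0..k}"
    have a: "norm (fps_nth A (Suc (k - i))) \<le> c"
      by (rule A) simp
    show "norm (fps_nth W i) * (real (Suc (k - i)) * norm (fps_nth A (Suc (k - i))))
            \<le> (if i = 0 then w * (real k + 1) * c else d * real k * c)"
    proof (cases "i = 0")
      case True
      have "norm (fps_nth W 0) * (real (Suc k) * norm (fps_nth A (Suc k))) \<le> w * (real (Suc k) * c)"
        using a W0 c True order.trans[OF norm_ge_zero W0] by (intro mult_mono mult_left_mono) auto
      then show ?thesis
        using True by (simp add: algebra_simps)
    next
      case False
      then have "norm (fps_nth W i) * (real (Suc (k - i)) * norm (fps_nth A (Suc (k - i))))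
                   \<le> d * (real k * c)"
        using a W[of i] i c d by (intro mult_mono) auto
      then show ?thesis
        using False by (simp add: mult.assoc)
    qed
  qed
  also have "\<dots> = w * (real k + 1) * c + d * real k * real k * c"
    by (simp add: sum.atLeast_Suc_atMost)
  also have "\<dots> \<le> real (Suc k) * (c * (w + d * k))"
    using c d by (simp add: algebra_simps)
  finally show ?thesis
    by (simp only: mult_le_cancel_left_pos of_nat_0_less_iff zero_less_Suc)
qed

lemma sums_power_Suc_and_of_nat_mult_power_Suc:
  fixes \<rho> :: real
  assumes "0 \<le> \<rho>" "\<rho> < 1"
  shows "(\<lambda>n. \<rho> ^ Suc n) sums (\<rho> / (1 - \<rho>))"
    and "(\<lambda>n. real n * \<rho> ^ Suc n) sums (\<rho> / (1 - \<rho>))\<^sup>2"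
proof -
  show "(\<lambda>n. \<rho> ^ Suc n) sums (\<rho> / (1 - \<rho>))"
    using sums_mult[OF geometric_sums[of \<rho>], of \<rho>] assms by simp
  have "(\<lambda>n. \<rho>\<^sup>2 * (real (Suc n) * \<rho> ^ n)) sums (\<rho>\<^sup>2 * (1 / (1 - \<rho>)\<^sup>2))"
    using assms by (intro sums_mult geometric_deriv_sums) auto
  then have "(\<lambda>n. real (Suc n) * \<rho> ^ Suc (Suc n)) sums (\<rho> / (1 - \<rho>))\<^sup>2"
    by (simp add: power2_eq_square power_divide algebra_simps)
  then show "(\<lambda>n. real n * \<rho> ^ Suc n) sums (\<rho> / (1 - \<rho>))\<^sup>2"
    by (subst (asm) sums_Suc_iff) simp
qed

lemma suminf_le_if_coefficients_le_linear:
  fixes x :: "nat \<Rightarrow> real" and \<rho> p q :: real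
  assumes \<rho>: "0 \<le> \<rho>" "\<rho> < 1"
    and x: "\<And>n. 0 \<le> x n" "\<And>n. x n \<le> p + q * n"
  shows "summable (\<lambda>n. x n * \<rho> ^ Suc n)"
    and "(\<Sum>n. x n * \<rho> ^ Suc n) \<le> p * (\<rho> / (1 - \<rho>)) + q * (\<rho> / (1 - \<rho>))\<^sup>2"
proof -
  have bound: "(\<lambda>n. p * \<rho> ^ Suc n + q * (real n * \<rho> ^ Suc n))
                 sums (p * (\<rho> / (1 - \<rho>)) + q * (\<rho> / (1 - \<rho>))\<^sup>2)"
    using sums_power_Suc_and_of_nat_mult_power_Suc[OF \<rho>] by (intro sums_add sums_mult)
  have le: "x n * \<rho> ^ Suc n \<le> p * \<rho> ^ Suc n + q * (real n * \<rho> ^ Suc n)" for n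
    using mult_right_mono[OF x(2)[of n], of "\<rho> ^ Suc n"] \<rho> by (simp add: algebra_simps)
  show sum: "summable (\<lambda>n. x n * \<rho> ^ Suc n)"
    using \<rho> x le by (intro summable_comparison_test'[OF sums_summable[OF bound], of 0]) auto
  show "(\<Sum>n. x n * \<rho> ^ Suc n) \<le> p * (\<rho> / (1 - \<rho>)) + q * (\<rho> / (1 - \<rho>))\<^sup>2"
    using suminf_le[OF le sum sums_summable[OF bound]] sums_unique[OF bound] by simp
qed

text \<open>With \<open>t = \<rho> / (1 - \<rho>)\<close>, \<open>\<rho> \<le> 1/5\<close> is exactly \<open>t \<le> 1/4\<close>.\<close>
lemma bohr_quadratic_le_1:
  fixes \<alpha> w t :: real
  assumes "0 \<le> \<alpha>" "\<alpha> \<le> 1" "0 \<le> w" "w \<le> 1" "0 \<le> t" "t \<le> 1/4"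
  shows "\<alpha> + (1 - \<alpha>\<^sup>2) * t + (1 - \<alpha>\<^sup>2) * (w * t + (1 - w\<^sup>2) * t\<^sup>2) \<le> 1"
proof -
  have "(1 - w\<^sup>2) * t \<le> (1 - w\<^sup>2) * (1/4)"
    using assms by (intro mult_left_mono) (auto simp: power_le_one)
  also have "\<dots> \<le> 1 - w"
    using mult_nonneg_nonneg[of "1 - w" "3 - w"] assms by (simp add: power2_eq_square field_simps)
  finally have "t * (1 + w + (1 - w\<^sup>2) * t) \<le> t * 2"
    using assms by (intro mult_left_mono) auto
  then have "(1 - \<alpha>\<^sup>2) * (t * (1 + w + (1 - w\<^sup>2) * t)) \<le> (1 - \<alpha>\<^sup>2) * (1/2)"
    using assms by (intro mult_left_mono) (auto simp: power_le_one)
  moreover have "\<alpha> + (1 - \<alpha>\<^sup>2) * (1/2) \<le> 1"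
    using zero_le_power2[of "1 - \<alpha>"] by (simp add: power2_eq_square field_simps)
  moreover have "\<alpha> + (1 - \<alpha>\<^sup>2) * t + (1 - \<alpha>\<^sup>2) * (w * t + (1 - w\<^sup>2) * t\<^sup>2)
                  = \<alpha> + (1 - \<alpha>\<^sup>2) * (t * (1 + w + (1 - w\<^sup>2) * t))"
    by (simp add: algebra_simps power2_eq_square)
  ultimately show ?thesis
    by linarith
qed

lemma bohr_hyps_0_iff:
  "bohr_hyps 0 H G A B \<longleftrightarrow>
     H holomorphic_on ball 0 1 \<and> G holomorphic_on ball 0 1 \<and>
     (\<forall>u\<in>ball 0 1. norm (H u) \<le> 1) \<and>
     (\<forall>u\<in>ball 0 1. (\<lambda>n. A n * u ^ n) sums H u) \<and>
     (\<forall>u\<in>ball 0 1. (\<lambda>n. B (Suc n) * u ^ Suc n) sums G u) \<and>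
     sense_preserving_on H G (ball 0 1)"
  by (simp add: bohr_hyps_def Omega_def)

lemma bohr_sum_0:
  "bohr_sum 0 A B \<rho> = (\<Sum>n. norm (A n) * \<rho> ^ n) + (\<Sum>n. norm (B (Suc n)) * \<rho> ^ Suc n)"
  by (simp add: bohr_sum_def)

lemma bohr_sum_le_1_if_coefficient_bounds:
  fixes A B :: "nat \<Rightarrow> complex" and \<alpha> w \<rho> :: real
  assumes \<alpha>: "norm (A 0) = \<alpha>" "\<alpha> \<le> 1" and w: "0 \<le> w" "w \<le> 1"
    and A: "\<And>n. n > 0 \<Longrightarrow> norm (A n) \<le> 1 - \<alpha>\<^sup>2"
    and B: "\<And>k. norm (B (Suc k)) \<le> (1 - \<alpha>\<^sup>2) * w + (1 - \<alpha>\<^sup>2) * (1 - w\<^sup>2) * k"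
    and \<rho>: "0 \<le> \<rho>" "\<rho> \<le> 1/5"
  shows "bohr_sum 0 A B \<rho> \<le> 1"
proof -
  define t where "t = \<rho> / (1 - \<rho>)"
  have \<rho>1: "\<rho> < 1"
    using \<rho> by simp
  have sumA: "summable (\<lambda>n. norm (A (Suc n)) * \<rho> ^ Suc n)"
    and leA: "(\<Sum>n. norm (A (Suc n)) * \<rho> ^ Suc n) \<le> (1 - \<alpha>\<^sup>2) * t"
    using suminf_le_if_coefficients_le_linear[OF \<rho>(1) \<rho>1, of "\<lambda>n. norm (A (Suc n))" "1 - \<alpha>\<^sup>2" 0] A
    by (simp_all add: t_def)
  have "(\<Sum>n. norm (A n) * \<rho> ^ n) = \<alpha> + (\<Sum>n. norm (A (Suc n)) * \<rho> ^ Suc n)"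
    using suminf_split_head[of "\<lambda>n. norm (A n) * \<rho> ^ n"] sumA
      summable_Suc_iff[of "\<lambda>n. norm (A n) * \<rho> ^ n"] \<alpha>(1)
    by simp
  moreover have "(\<Sum>n. norm (B (Suc n)) * \<rho> ^ Suc n) \<le> (1 - \<alpha>\<^sup>2) * w * t + (1 - \<alpha>\<^sup>2) * (1 - w\<^sup>2) * t\<^sup>2"
    unfolding t_def by (rule suminf_le_if_coefficients_le_linear(2)[OF \<rho>(1) \<rho>1]) (use B in auto)
  moreover have "\<alpha> + (1 - \<alpha>\<^sup>2) * t + (1 - \<alpha>\<^sup>2) * (w * t + (1 - w\<^sup>2) * t\<^sup>2) \<le> 1"
    using \<rho> \<alpha> w norm_ge_zero[of "A 0"] by (intro bohr_quadratic_le_1) (auto simp: t_def field_simps)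
  ultimately show ?thesis
    using leA by (simp add: bohr_sum_0 algebra_simps)
qed

theorem harmonic_bohr_inequality_disk:
  assumes hyps: "bohr_hyps 0 H G A B" and \<rho>: "0 \<le> \<rho>" "\<rho> \<le> 1/5"
  shows "bohr_sum 0 A B \<rho> \<le> 1"
proof -
  from hyps have holH: "H holomorphic_on ball 0 1" and holG: "G holomorphic_on ball 0 1"
    and bndH: "\<And>u. u \<in> ball 0 1 \<Longrightarrow> norm (H u) \<le> 1"
    and serH: "\<And>u. u \<in> ball 0 1 \<Longrightarrow> (\<lambda>n. A n * u ^ n) sums H u"
    and serG: "\<And>u. u \<in> ball 0 1 \<Longrightarrow> (\<lambda>n. B (Suc n) * u ^ Suc n) sums G u"
    and sp: "sense_preserving_on H G (ball 0 1)"
    by (simp_all add: bohr_hyps_0_iff)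
  define B' where "B' n = (if n = 0 then 0 else B n)" for n
  have expH: "H has_fps_expansion Abs_fps A"
    by (rule has_fps_expansion_if_sums_on_disk[OF serH])
  have expG: "G has_fps_expansion Abs_fps B'"
  proof (rule has_fps_expansion_if_sums_on_disk)
    fix u :: complex assume "u \<in> ball 0 1"
    then have "(\<lambda>n. B' (Suc n) * u ^ Suc n) sums G u"
      using serG by (simp add: B'_def)
    then show "(\<lambda>n. B' n * u ^ n) sums G u"
      by (subst (asm) sums_Suc_iff) (simp add: B'_def)
  qed
  obtain W where eq: "fps_deriv (Abs_fps B') = W * fps_deriv (Abs_fps A)"
    and W0: "norm (fps_nth W 0) \<le> 1"
    and W: "\<And>n. n > 0 \<Longrightarrow> norm (fps_nth W n) \<le> 1 - (norm (fps_nth W 0))\<^sup>2"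
    using sense_preserving_dilatation_fps[OF holH holG sp expH expG] by blast
  define \<alpha> where "\<alpha> = norm (A 0)"
  define w where "w = norm (fps_nth W 0)"
  have A: "norm (A n) \<le> 1 - \<alpha>\<^sup>2" if "n > 0" for n
    using wiener_inequality[OF holH bndH expH that] by (simp add: \<alpha>_def)
  have "A 0 = H 0"
    using has_fps_expansion_imp_0_eq_fps_nth_0[OF expH] by simp
  then have "\<alpha> \<le> 1"
    using bndH[of 0] by (simp add: \<alpha>_def)
  moreover have "norm (B (Suc k)) \<le> (1 - \<alpha>\<^sup>2) * w + (1 - \<alpha>\<^sup>2) * (1 - w\<^sup>2) * k" for k
    using norm_fps_nth_Suc_le_if_fps_deriv_eq_mult[OF eq, of "1 - \<alpha>\<^sup>2" w "1 - w\<^sup>2" k] A W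
    by (simp add: B'_def w_def algebra_simps)
  ultimately show ?thesis
    using A W0 \<rho> by (intro bohr_sum_le_1_if_coefficient_bounds[of A \<alpha> w]) (auto simp: \<alpha>_def w_def)
qed

section \<open>Sharpness of the radius 1/5\<close>

definition bohr_extremal :: "real \<Rightarrow> complex \<Rightarrow> complex" where
  "bohr_extremal \<alpha> u = (of_real \<alpha> - u) / (1 - of_real \<alpha> * u)"

definition bohr_extremal_coeff :: "real \<Rightarrow> nat \<Rightarrow> complex" where
  "bohr_extremal_coeff \<alpha> n = (if n = 0 then of_real \<alpha> else - of_real ((1 - \<alpha>\<^sup>2) * \<alpha> ^ (n - 1)))"

lemma bohr_extremal_tail_sums:
  fixes \<alpha> :: real
  assumes \<alpha>: "0 \<le> \<alpha>" "\<alpha> < 1" and u: "u \<in> ball 0 1"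
  shows "1 - of_real \<alpha> * u \<noteq> 0"
    and "(\<lambda>n. bohr_extremal_coeff \<alpha> (Suc n) * u ^ Suc n) sums (bohr_extremal \<alpha> u - of_real \<alpha>)"
proof -
  have small: "norm (of_real \<alpha> * u) < 1"
    using u \<alpha> mult_left_le_one_le[of "norm u" \<alpha>] by (simp add: norm_mult)
  then show den: "1 - of_real \<alpha> * u \<noteq> 0"
    by fastforce
  have geom: "(\<lambda>n. (- of_real (1 - \<alpha>\<^sup>2) * u) * (of_real \<alpha> * u) ^ n)
                sums ((- of_real (1 - \<alpha>\<^sup>2) * u) * (1 / (1 - of_real \<alpha> * u)))"
    by (intro sums_mult geometric_sums small)
  have terms: "(- of_real (1 - \<alpha>\<^sup>2) * u) * (of_real \<alpha> * u) ^ n = bohr_extremal_coeff \<alpha> (Suc n) * u ^ Suc n"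
    for n
    by (simp add: bohr_extremal_coeff_def power_mult_distrib algebra_simps)
  have "(- of_real (1 - \<alpha>\<^sup>2) * u) * (1 / (1 - of_real \<alpha> * u)) = bohr_extremal \<alpha> u - of_real \<alpha>"
    using den by (simp add: bohr_extremal_def field_simps power2_eq_square)
  then show "(\<lambda>n. bohr_extremal_coeff \<alpha> (Suc n) * u ^ Suc n) sums (bohr_extremal \<alpha> u - of_real \<alpha>)"
    using geom unfolding terms by simp
qed

lemma bohr_extremal_hyps:
  fixes \<alpha> :: real
  assumes \<alpha>: "0 < \<alpha>" "\<alpha> < 1"
  defines "H \<equiv> bohr_extremal \<alpha>" and "G \<equiv> \<lambda>u. of_real \<alpha> * (bohr_extremal \<alpha> u - of_real \<alpha>)"
  shows "bohr_hyps 0 H G (bohr_extremal_coeff \<alpha>) (\<lambda>n. of_real \<alpha> * bohr_extremal_coeff \<alpha> n)"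
proof -
  note den = bohr_extremal_tail_sums(1)[OF less_imp_le[OF \<alpha>(1)] \<alpha>(2)]
  note tail = bohr_extremal_tail_sums(2)[OF less_imp_le[OF \<alpha>(1)] \<alpha>(2)]
  have H_deriv: "(H has_field_derivative - of_real (1 - \<alpha>\<^sup>2) / (1 - of_real \<alpha> * u)\<^sup>2) (at u)"
    if "u \<in> ball 0 1" for u
    unfolding H_def bohr_extremal_def[abs_def] using den[OF that]
    by (auto intro!: derivative_eq_intros simp: field_simps power2_eq_square)
  have holH: "H holomorphic_on ball 0 1"
    unfolding H_def bohr_extremal_def[abs_def] using den by (intro holomorphic_intros) auto
  moreover have "G holomorphic_on ball 0 1"
    using holH unfolding G_def H_def by (intro holomorphic_intros)
  moreover have "norm (H u) \<le> 1" if "u \<in> ball 0 1" for u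
    using norm_diff_le_norm_one_minus_cnj_mult[of u "of_real \<alpha>"] that \<alpha> den[OF that]
    by (simp add: H_def bohr_extremal_def norm_divide norm_minus_commute divide_le_eq_1)
  moreover have "(\<lambda>n. bohr_extremal_coeff \<alpha> n * u ^ n) sums H u" if "u \<in> ball 0 1" for u
    using tail[OF that] by (subst (asm) sums_Suc_iff) (simp add: H_def bohr_extremal_coeff_def)
  moreover have "(\<lambda>n. of_real \<alpha> * bohr_extremal_coeff \<alpha> (Suc n) * u ^ Suc n) sums G u"
    if "u \<in> ball 0 1" for u
    using sums_mult[OF tail[OF that], of "of_real \<alpha>"] by (simp add: G_def mult.assoc)
  moreover have "sense_preserving_on H G (ball 0 1)"
    unfolding sense_preserving_on_def
  proof
    fix u :: complex assume u: "u \<in> ball 0 1"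
    have H': "deriv H u = - of_real (1 - \<alpha>\<^sup>2) / (1 - of_real \<alpha> * u)\<^sup>2"
      by (rule DERIV_imp_deriv[OF H_deriv[OF u]])
    have G': "deriv G u = of_real \<alpha> * deriv H u"
      unfolding G_def H_def[symmetric] H'
      by (rule DERIV_imp_deriv) (auto intro!: derivative_eq_intros H_deriv[OF u])
    have "1 - \<alpha>\<^sup>2 > 0"
      using \<alpha> by (simp add: abs_square_less_1)
    moreover from this have "deriv H u \<noteq> 0"
      using den[OF u] unfolding H'
      by (metis divide_eq_0_iff neg_equal_0_iff_equal of_real_eq_0_iff power_not_zero less_irrefl)
    ultimately have "0 < (1 - \<alpha>\<^sup>2) * (norm (deriv H u))\<^sup>2"
      by simp
    then show "(norm (deriv H u))\<^sup>2 - (norm (deriv G u))\<^sup>2 > 0"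
      using \<alpha> by (simp add: G' norm_mult power_mult_distrib algebra_simps)
  qed
  ultimately show ?thesis
    by (simp add: bohr_hyps_0_iff mult.assoc)
qed

lemma bohr_sum_extremal:
  fixes \<alpha> \<rho> :: real
  assumes \<alpha>: "0 < \<alpha>" "\<alpha> < 1" and \<rho>: "0 \<le> \<rho>" "\<rho> < 1"
  shows "bohr_sum 0 (bohr_extremal_coeff \<alpha>) (\<lambda>n. of_real \<alpha> * bohr_extremal_coeff \<alpha> n) \<rho>
           = \<alpha> + (1 + \<alpha>) * ((1 - \<alpha>\<^sup>2) * \<rho> / (1 - \<alpha> * \<rho>))"
proof -
  have "norm (\<alpha> * \<rho>) < 1"
    using \<alpha> \<rho> mult_strict_mono[of \<alpha> 1 \<rho> 1] by simp
  then have geom: "(\<lambda>n. (1 - \<alpha>\<^sup>2) * \<rho> * (\<alpha> * \<rho>) ^ n) sums ((1 - \<alpha>\<^sup>2) * \<rho> / (1 - \<alpha> * \<rho>))"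
    using sums_mult[OF geometric_sums, of "\<alpha> * \<rho>" "(1 - \<alpha>\<^sup>2) * \<rho>"] by simp
  have "norm (bohr_extremal_coeff \<alpha> (Suc n)) = (1 - \<alpha>\<^sup>2) * \<alpha> ^ n" for n
    unfolding bohr_extremal_coeff_def using \<alpha>
    by (simp only: Suc_not_Zero if_False diff_Suc_1 norm_minus_cancel norm_of_real)
      (simp add: abs_mult power_le_one)
  then have terms: "norm (bohr_extremal_coeff \<alpha> (Suc n)) * \<rho> ^ Suc n = (1 - \<alpha>\<^sup>2) * \<rho> * (\<alpha> * \<rho>) ^ n" for n
    by (simp add: power_mult_distrib)
  have "(\<lambda>n. norm (bohr_extremal_coeff \<alpha> n) * \<rho> ^ n) sums ((1 - \<alpha>\<^sup>2) * \<rho> / (1 - \<alpha> * \<rho>) + \<alpha>)"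
    using geom \<alpha> unfolding terms[symmetric] by (subst (asm) sums_Suc_iff) (simp add: bohr_extremal_coeff_def)
  moreover have "(\<lambda>n. norm (of_real \<alpha> * bohr_extremal_coeff \<alpha> (Suc n)) * \<rho> ^ Suc n)
                   sums (\<alpha> * ((1 - \<alpha>\<^sup>2) * \<rho> / (1 - \<alpha> * \<rho>)))"
    using sums_mult[OF geom, of \<alpha>] \<alpha> unfolding terms[symmetric] by (simp add: norm_mult mult.assoc)
  ultimately have "bohr_sum 0 (bohr_extremal_coeff \<alpha>) (\<lambda>n. of_real \<alpha> * bohr_extremal_coeff \<alpha> n) \<rho>
      = ((1 - \<alpha>\<^sup>2) * \<rho> / (1 - \<alpha> * \<rho>) + \<alpha>) + \<alpha> * ((1 - \<alpha>\<^sup>2) * \<rho> / (1 - \<alpha> * \<rho>))"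
    unfolding bohr_sum_0 by (simp add: sums_unique[symmetric])
  then show ?thesis
    by (simp only: distrib_right mult_1_left add_ac)
qed

lemma bohr_excess_beyond_one_fifth:
  fixes \<rho> :: real
  assumes \<rho>: "1/5 < \<rho>" "\<rho> < 1"
  obtains \<alpha> where "0 < \<alpha>" "\<alpha> < 1" "1 < \<alpha> + (1 + \<alpha>) * ((1 - \<alpha>\<^sup>2) * \<rho> / (1 - \<alpha> * \<rho>))"
proof -
  define \<alpha> where "\<alpha> = (1 + 1 / (5 * \<rho>)) / 2"
  have \<alpha>: "0 < \<alpha>" "\<alpha> < 1" and five: "1 < 5 * (\<alpha> * \<rho>)"
    using \<rho> by (simp_all add: \<alpha>_def field_simps)
  have "4 * \<alpha> \<le> (1 + \<alpha>)\<^sup>2"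
    using zero_le_power2[of "1 - \<alpha>"] by (simp add: power2_eq_square algebra_simps)
  then have "4 * (\<alpha> * \<rho>) \<le> (1 + \<alpha>)\<^sup>2 * \<rho>"
    using mult_right_mono[of "4 * \<alpha>" "(1 + \<alpha>)\<^sup>2" \<rho>] \<rho> by simp
  then have "1 - \<alpha> * \<rho> < (1 + \<alpha>)\<^sup>2 * \<rho>"
    using five by linarith
  then have "(1 - \<alpha>) * (1 - \<alpha> * \<rho>) < (1 - \<alpha>) * ((1 + \<alpha>)\<^sup>2 * \<rho>)"
    using \<alpha> by (intro mult_strict_left_mono) auto
  moreover have "\<alpha> * \<rho> < 1"
    using \<alpha> \<rho> mult_strict_mono[of \<alpha> 1 \<rho> 1] by simp
  ultimately have "1 < \<alpha> + (1 + \<alpha>) * ((1 - \<alpha>\<^sup>2) * \<rho> / (1 - \<alpha> * \<rho>))"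
    by (simp add: field_simps power2_eq_square)
  with \<alpha> that show ?thesis
    by blast
qed

section \<open>Transfer from the unit disk to \<open>Omega \<gamma>\<close>\<close>

definition disk_to_Omega :: "real \<Rightarrow> complex \<Rightarrow> complex" where
  "disk_to_Omega \<gamma> u = (u - of_real \<gamma>) / (1 - of_real \<gamma>)"

lemma open_Omega: "open (Omega \<gamma>)"
  by (simp add: Omega_def)

lemma norm_one_minus_of_real:
  fixes \<gamma> :: real
  assumes "\<gamma> < 1"
  shows "norm (1 - complex_of_real \<gamma>) = 1 - \<gamma>"
  using assms norm_of_real[of "1 - \<gamma>"] by simp

lemma disk_to_Omega_inverse:
  fixes \<gamma> :: real
  assumes "\<gamma> < 1"
  shows "disk_to_Omega \<gamma> ((1 - of_real \<gamma>) * z + of_real \<gamma>) = z"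
    and "(1 - of_real \<gamma>) * disk_to_Omega \<gamma> u + of_real \<gamma> = u"
  using assms by (simp_all add: disk_to_Omega_def field_simps)

lemma mem_Omega_iff:
  fixes \<gamma> :: real
  assumes "\<gamma> < 1"
  shows "z \<in> Omega \<gamma> \<longleftrightarrow> norm ((1 - of_real \<gamma>) * z + of_real \<gamma>) < 1"
proof -
  define c :: complex where "c = of_real (\<gamma> / (1 - \<gamma>))"
  have "z \<in> Omega \<gamma> \<longleftrightarrow> norm (z + c) < 1 / (1 - \<gamma>)"
    by (simp add: Omega_def c_def dist_norm norm_minus_commute add.commute)
  also have "\<dots> \<longleftrightarrow> norm (of_real (1 - \<gamma>) * (z + c)) < 1"
    using assms by (simp add: norm_mult norm_one_minus_of_real pos_less_divide_eq mult.commute)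
  also have "of_real (1 - \<gamma>) * (z + c) = (1 - of_real \<gamma>) * z + of_real \<gamma>"
    using assms by (simp add: c_def field_simps)
  finally show ?thesis .
qed

lemma Omega_eq_image_disk_to_Omega:
  fixes \<gamma> :: real
  assumes "\<gamma> < 1"
  shows "Omega \<gamma> = disk_to_Omega \<gamma> ` ball 0 1"
proof (intro set_eqI iffI)
  fix z assume "z \<in> Omega \<gamma>"
  then show "z \<in> disk_to_Omega \<gamma> ` ball 0 1"
    using mem_Omega_iff[OF assms] disk_to_Omega_inverse(1)[OF assms] by (metis image_eqI mem_ball_0)
next
  fix z assume "z \<in> disk_to_Omega \<gamma> ` ball 0 1"
  then show "z \<in> Omega \<gamma>"
    using mem_Omega_iff[OF assms] disk_to_Omega_inverse(2)[OF assms] by auto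
qed

lemma holomorphic_on_Omega_iff:
  fixes \<gamma> :: real
  assumes \<gamma>: "\<gamma> < 1"
  shows "f holomorphic_on Omega \<gamma> \<longleftrightarrow> (f \<circ> disk_to_Omega \<gamma>) holomorphic_on ball 0 1"
proof
  assume "f holomorphic_on Omega \<gamma>"
  moreover have "disk_to_Omega \<gamma> holomorphic_on ball 0 1"
    unfolding disk_to_Omega_def[abs_def] using \<gamma> by (intro holomorphic_intros) auto
  ultimately show "(f \<circ> disk_to_Omega \<gamma>) holomorphic_on ball 0 1"
    using holomorphic_on_compose_gen Omega_eq_image_disk_to_Omega[OF \<gamma>] by blast
next
  assume "(f \<circ> disk_to_Omega \<gamma>) holomorphic_on ball 0 1"
  moreover have "(\<lambda>z. (1 - of_real \<gamma>) * z + of_real \<gamma>) holomorphic_on Omega \<gamma>"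
    by (intro holomorphic_intros)
  moreover have "(\<lambda>z. (1 - of_real \<gamma>) * z + of_real \<gamma>) ` Omega \<gamma> \<subseteq> ball 0 1"
    using mem_Omega_iff[OF \<gamma>] by auto
  ultimately have "(f \<circ> disk_to_Omega \<gamma> \<circ> (\<lambda>z. (1 - of_real \<gamma>) * z + of_real \<gamma>)) holomorphic_on Omega \<gamma>"
    using holomorphic_on_compose_gen by blast
  then show "f holomorphic_on Omega \<gamma>"
    by (simp add: o_def disk_to_Omega_inverse(1)[OF \<gamma>])
qed

lemma sense_preserving_on_Omega_iff:
  fixes \<gamma> :: real
  assumes \<gamma>: "\<gamma> < 1" and hol: "h holomorphic_on Omega \<gamma>" "g holomorphic_on Omega \<gamma>"
  shows "sense_preserving_on h g (Omega \<gamma>) \<longleftrightarrow>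
           sense_preserving_on (h \<circ> disk_to_Omega \<gamma>) (g \<circ> disk_to_Omega \<gamma>) (ball 0 1)"
proof -
  have deriv: "deriv (f \<circ> disk_to_Omega \<gamma>) u = deriv f (disk_to_Omega \<gamma> u) / (1 - of_real \<gamma>)"
    if "f holomorphic_on Omega \<gamma>" "u \<in> ball 0 1" for f u
  proof -
    have "(disk_to_Omega \<gamma> has_field_derivative 1 / (1 - of_real \<gamma>)) (at u)"
      unfolding disk_to_Omega_def[abs_def] using \<gamma> by (auto intro!: derivative_eq_intros)
    moreover have "(f has_field_derivative deriv f (disk_to_Omega \<gamma> u)) (at (disk_to_Omega \<gamma> u))"
      using that Omega_eq_image_disk_to_Omega[OF \<gamma>] by (intro holomorphic_derivI[OF _ open_Omega]) auto
    ultimately show ?thesis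
      by (intro DERIV_imp_deriv) (auto dest: DERIV_chain' simp: o_def)
  qed
  have "(norm (deriv (h \<circ> disk_to_Omega \<gamma>) u))\<^sup>2 - (norm (deriv (g \<circ> disk_to_Omega \<gamma>) u))\<^sup>2
          = ((norm (deriv h (disk_to_Omega \<gamma> u)))\<^sup>2 - (norm (deriv g (disk_to_Omega \<gamma> u)))\<^sup>2) / (1 - \<gamma>)\<^sup>2"
    if "u \<in> ball 0 1" for u
    using that hol \<gamma>
    by (simp add: deriv norm_divide norm_one_minus_of_real power_divide diff_divide_distrib)
  moreover have "(1 - \<gamma>)\<^sup>2 > 0"
    using \<gamma> by simp
  ultimately show ?thesis
    unfolding sense_preserving_on_def Omega_eq_image_disk_to_Omega[OF \<gamma>]
    by (simp add: zero_less_divide_iff)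
qed

lemma bohr_hyps_rescale:
  fixes \<gamma> :: real
  assumes \<gamma>: "\<gamma> < 1"
  shows "bohr_hyps \<gamma> h g a b \<longleftrightarrow>
           bohr_hyps 0 (h \<circ> disk_to_Omega \<gamma>) (g \<circ> disk_to_Omega \<gamma>)
             (\<lambda>n. a n / (1 - of_real \<gamma>) ^ n) (\<lambda>n. b n / (1 - of_real \<gamma>) ^ n)"
proof -
  have "disk_to_Omega \<gamma> u + of_real (\<gamma> / (1 - \<gamma>)) = u / (1 - of_real \<gamma>)" for u
    by (simp add: disk_to_Omega_def add_divide_distrib[symmetric])
  then have ser_iff: "(\<forall>z\<in>Omega \<gamma>. (\<lambda>n. c n * (z + of_real (\<gamma> / (1 - \<gamma>))) ^ e n) sums f z)
      \<longleftrightarrow> (\<forall>u\<in>ball 0 1. (\<lambda>n. c n / (1 - of_real \<gamma>) ^ e n * u ^ e n) sums (f \<circ> disk_to_Omega \<gamma>) u)"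
    for c :: "nat \<Rightarrow> complex" and e :: "nat \<Rightarrow> nat" and f
    by (simp add: Omega_eq_image_disk_to_Omega[OF \<gamma>] power_divide)
  have bnd_iff: "(\<forall>z\<in>Omega \<gamma>. norm (f z) \<le> 1) \<longleftrightarrow> (\<forall>u\<in>ball 0 1. norm ((f \<circ> disk_to_Omega \<gamma>) u) \<le> 1)"
    for f
    by (simp add: Omega_eq_image_disk_to_Omega[OF \<gamma>])
  show ?thesis
    unfolding bohr_hyps_0_iff unfolding bohr_hyps_def bnd_iff ser_iff
    using holomorphic_on_Omega_iff[OF \<gamma>] sense_preserving_on_Omega_iff[OF \<gamma>] by blast
qed

lemma bohr_sum_rescale:
  fixes \<gamma> :: real
  assumes "\<gamma> < 1"
  shows "bohr_sum \<gamma> a b \<rho> = bohr_sum 0 (\<lambda>n. a n / (1 - of_real \<gamma>) ^ n) (\<lambda>n. b n / (1 - of_real \<gamma>) ^ n) \<rho>"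
  using assms by (simp add: bohr_sum_def norm_divide norm_power norm_one_minus_of_real del: power_Suc)

theorem corollary2p1:
  fixes \<gamma> :: real
  assumes "0 \<le> \<gamma>" and "\<gamma> < 1"
  shows "(\<forall>h g a b. bohr_hyps \<gamma> h g a b \<longrightarrow>
            (\<forall>z\<in>Omega \<gamma>. cmod ((1 - \<gamma>) * z + \<gamma>) \<le> 1/5 \<longrightarrow>
               bohr_sum \<gamma> a b (cmod ((1 - \<gamma>) * z + \<gamma>)) \<le> 1))
       \<and> (\<forall>\<rho>. 1/5 < \<rho> \<and> \<rho> < 1 \<longrightarrow>
            (\<exists>h g a b. bohr_hyps \<gamma> h g a b \<and> bohr_sum \<gamma> a b \<rho> > 1))"
proof -
  note rescale = bohr_hyps_rescale[OF \<open>\<gamma> < 1\<close>] bohr_sum_rescale[OF \<open>\<gamma> < 1\<close>]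
  have "bohr_sum \<gamma> a b (cmod ((1 - \<gamma>) * z + \<gamma>)) \<le> 1"
    if "bohr_hyps \<gamma> h g a b" "cmod ((1 - \<gamma>) * z + \<gamma>) \<le> 1/5" for h g a b and z :: complex
    using harmonic_bohr_inequality_disk[OF that(1)[unfolded rescale(1)]] that(2)
    unfolding rescale(2) by simp
  moreover have "\<exists>h g a b. bohr_hyps \<gamma> h g a b \<and> bohr_sum \<gamma> a b \<rho> > 1"
    if \<rho>: "1/5 < \<rho>" "\<rho> < 1" for \<rho>
  proof -
    obtain \<alpha> where \<alpha>: "0 < \<alpha>" "\<alpha> < 1"
      and excess: "1 < \<alpha> + (1 + \<alpha>) * ((1 - \<alpha>\<^sup>2) * \<rho> / (1 - \<alpha> * \<rho>))"
      using bohr_excess_beyond_one_fifth[OF \<rho>] by blast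
    define H where "H = bohr_extremal \<alpha>"
    define G where "G u = of_real \<alpha> * (H u - of_real \<alpha>)" for u
    define A where "A = bohr_extremal_coeff \<alpha>"
    define B where "B n = of_real \<alpha> * A n" for n
    define M :: "complex \<Rightarrow> complex" where "M z = (1 - of_real \<gamma>) * z + of_real \<gamma>" for z
    have "bohr_hyps 0 H G A B" "bohr_sum 0 A B \<rho> > 1"
      using bohr_extremal_hyps[OF \<alpha>] bohr_sum_extremal[OF \<alpha>] \<rho> excess
      by (simp_all add: H_def G_def[abs_def] A_def B_def[abs_def])
    moreover have "M \<circ> disk_to_Omega \<gamma> = id" and "1 - complex_of_real \<gamma> \<noteq> 0"
      using \<open>\<gamma> < 1\<close> disk_to_Omega_inverse(2) by (auto simp: M_def fun_eq_iff)
    ultimately have "bohr_hyps \<gamma> (H \<circ> M) (G \<circ> M) (\<lambda>n. A n * (1 - of_real \<gamma>) ^ n) (\<lambda>n. B n * (1 - of_real \<gamma>) ^ n)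
        \<and> bohr_sum \<gamma> (\<lambda>n. A n * (1 - of_real \<gamma>) ^ n) (\<lambda>n. B n * (1 - of_real \<gamma>) ^ n) \<rho> > 1"
      unfolding rescale by (simp add: comp_assoc)
    then show ?thesis
      by blast
  qed
  ultimately show ?thesis
    by blast
qed

end
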